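(* Let $n \geq 1$. For full-rank lattices $L, L' \subset \mathbb{R}^n$ define $$\mathrm{scale}(L,L') = \min\{ s > 0 : R(V(L)) \subset s\,V(L') \text{ for some } R \in SO(n)\},$$ $$d_s(L,L') = \ln\big(\max\{ \mathrm{scale}(L,L'), \mathrm{scale}(L',L)\}\big)$$ (natural logarithm). Then $d_s$ is independent of the representation of the lattices (it depends only on the lattices $L, L'$ as point sets, not on chosen bases or unit cells), and it satisfies: (a) $d_s(L,L') \geq 0$, and $d_s(L,L') = 0$ if and only if $L$ and $L'$ are equivalent, i.e. $R(L) = L'$ for some $R \in SO(n)$; (b) $d_s(L,L') = d_s(L',L)$ for all $L, L'$; (c) $d_s(L,L') + d_s(L',L'') \geq d_s(L,L'')$ for all $L, L', L''$; (d) $d_s$ changes continuously under perturbations of the lattices: if $L(B)$ denotes the lattice generated by the columns of an invertible real $n\times n$ matrix $B$, then $(B,B') \mapsto d_s(L(B),L(B'))$ is continuous on $GL_n(\mathbb{R}) \times GL_n(\mathbb{R})$; (e) $d_s(\lambda L, \lambda L') = d_s(L,L')$ for every $\lambda > 0$, where $\lambda L = \{\lambda p : p \in L\}$.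
   Context: A (full-rank) lattice in $\mathbb{R}^n$ is the set $L = \{ x_1 u_1 + \dots + x_n u_n : x_i \in \mathbb{Z}\}$ for a basis $u_1,\dots,u_n$ of $\mathbb{R}^n$; in particular $0 \in L$. The Voronoi cell of $L$ is $V(L) = \{ p \in \mathbb{R}^n : d(p,0) \leq d(p,q) \text{ for all } q \in L \setminus \{0\}\}$, where $d$ is the Euclidean distance; it is a convex polytope centrally symmetric about $0$ with nonempty interior. For $s>0$ and $C\subset\mathbb{R}^n$, $sC = \{ s p : p \in C\}$. $SO(n)$ is the group of real $n \times n$ orthogonal matrices of determinant $1$ (rotations about the origin). Two lattices are called equivalent if one is obtained from the other by an orientation-preserving rigid motion of $\mathbb{R}^n$; for lattices (which contain $0$) this is the same as $R(L)=L'$ for some $R\in SO(n)$. *)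

theory Defs
  imports "HOL-Analysis.Analysis"
begin

definition lattice_gen :: "real^'n^'n \<Rightarrow> (real^'n) set" where
  "lattice_gen B = {B *v x | x. \<forall>i. x $ i \<in> \<int>}"

definition is_lattice :: "(real^'n) set \<Rightarrow> bool" where
  "is_lattice L \<longleftrightarrow> (\<exists>B. invertible B \<and> L = lattice_gen B)"

definition voronoi :: "(real^'n) set \<Rightarrow> (real^'n) set" where
  "voronoi L = {p. \<forall>q \<in> L - {0}. dist p 0 \<le> dist p q}"

definition rotation :: "real^'n^'n \<Rightarrow> bool" where
  "rotation R \<longleftrightarrow> orthogonal_matrix R \<and> det R = 1"

definition scale :: "(real^'n) set \<Rightarrow> (real^'n) set \<Rightarrow> real" where
  "scale L L' = Inf {s. s > 0 \<and> (\<exists>R. rotation R \<and> (\<lambda>p. R *v p) ` voronoi L \<subseteq> (\<lambda>p. s *\<^sub>R p) ` voronoi L')}"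

definition ds :: "(real^'n) set \<Rightarrow> (real^'n) set \<Rightarrow> real" where
  "ds L L' = ln (max (scale L L') (scale L' L))"

end

(*
  Admissible scales multiply when the rotations
  are composed, which makes scale submultiplicative and gives the triangle inequality; and
  scale L L' * scale L' L >= 1 because a rotation cannot map the bounded cell V(L) into a strictly
  smaller dilate of itself, which gives d_s >= 0. Rotations and dilations transport Voronoi
  cells, whence invariance under rescaling and d_s = 0 for equivalent lattices.

  Conversely, SO(n) is compact and Voronoi cells are closed, so the infimum is attained, and
  d_s(L, L') = 0 yields rotations with R V(L) <= V(L') and R' V(L') <= V(L). The isometry R'R maps
  the compact set V(L) into itself, hence onto it, so V(R L) = R V(L) = V(L'). A Voronoi cell
  determines its lattice: by induction on the norm, every lattice vector is a sum of two shorter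
  ones or is strictly Voronoi-relevant, and a relevant vector q is recovered from the cell as the
  normal of its facet through q/2.

  For continuity, a lattice vector B1 x of L(B1) is close to B x when B1 is close to B, so each
  of the cells V(L(B)), V(L(B1)) lies in a dilate of the other by a factor close to 1.
*)

theory Submission
  imports Defs
begin

section \<open>Matrices and rotations\<close>

lemma mem_scaleR_image_iff:
  fixes x :: "'a::real_vector"
  assumes "s \<noteq> 0"
  shows "x \<in> (\<lambda>p. s *\<^sub>R p) ` V \<longleftrightarrow> (1 / s) *\<^sub>R x \<in> V"
proof
  assume "(1 / s) *\<^sub>R x \<in> V"
  moreover have "x = s *\<^sub>R ((1 / s) *\<^sub>R x)"
    using assms by simp
  ultimately show "x \<in> (\<lambda>p. s *\<^sub>R p) ` V"
    by (rule rev_image_eqI)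
qed (use assms in auto)

lemma norm_matrix_vector_mult_le:
  fixes A :: "real^'n^'m"
  shows "norm (A *v x) \<le> norm A * norm x"
proof -
  have "norm (A *v x) = L2_set (\<lambda>i. \<bar>A $ i \<bullet> x\<bar>) UNIV"
    by (simp add: norm_vec_def matrix_vector_mul_component)
  also have "\<dots> \<le> L2_set (\<lambda>i. norm (A $ i) * norm x) UNIV"
    by (rule L2_set_mono) (auto simp: Cauchy_Schwarz_ineq2)
  also have "\<dots> = norm A * norm x"
    by (simp add: norm_vec_def L2_set_left_distrib)
  finally show ?thesis .
qed

lemma invertible_matrix_lower_bound:
  fixes B :: "real^'n^'n"
  assumes "invertible B"
  obtains K where "K > 0" "\<And>x. norm x \<le> K * norm (B *v x)"
proof -
  obtain B' where B': "B' ** B = mat 1"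
    using assms unfolding invertible_def by blast
  have "norm x \<le> (norm B' + 1) * norm (B *v x)" for x
  proof -
    have "norm x = norm (B' *v (B *v x))"
      by (simp add: matrix_vector_mul_assoc B')
    also have "\<dots> \<le> norm B' * norm (B *v x)"
      by (rule norm_matrix_vector_mult_le)
    also have "\<dots> \<le> (norm B' + 1) * norm (B *v x)"
      by (simp add: mult_right_mono)
    finally show ?thesis .
  qed
  then show thesis
    using that[of "norm B' + 1"] by (simp add: add_nonneg_pos)
qed

lemma matrix_lower_bound_perturb:
  fixes B B1 :: "real^'n^'n"
  assumes K: "\<And>x. norm x \<le> K * norm (B *v x)" "K > 0"
    and close: "K * norm (B1 - B) \<le> 1/2"
  shows "norm x \<le> 2 * K * norm (B1 *v x)"
proof -
  have "norm (B *v x) \<le> norm (B1 *v x) + norm ((B - B1) *v x)"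
    by (metis add_diff_cancel_left' matrix_vector_mult_diff_rdistrib norm_triangle_sub)
  also have "\<dots> \<le> norm (B1 *v x) + norm (B1 - B) * norm x"
    using norm_matrix_vector_mult_le[of "B - B1" x] by (simp add: norm_minus_commute)
  finally have "norm x \<le> K * (norm (B1 *v x) + norm (B1 - B) * norm x)"
    using K(1)[of x] mult_left_mono[of _ _ K] K(2) by (meson less_imp_le order_trans)
  also have "\<dots> = K * norm (B1 *v x) + (K * norm (B1 - B)) * norm x"
    by (simp add: algebra_simps)
  also have "\<dots> \<le> K * norm (B1 *v x) + 1/2 * norm x"
    using mult_right_mono[OF close norm_ge_zero[of x]] by simp
  finally show ?thesis
    by simp
qed

lemma norm_orthogonal_matrix_mult:
  fixes Q :: "real^'n^'n"
  assumes "orthogonal_matrix Q"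
  shows "norm (Q *v x) = norm x"
  using assms orthogonal_transformation_matrix[of "(*v) Q"]
  by (simp add: orthogonal_transformation_norm)

lemma inner_orthogonal_matrix_mult:
  fixes Q :: "real^'n^'n"
  assumes "orthogonal_matrix Q"
  shows "(Q *v x) \<bullet> (Q *v y) = x \<bullet> y"
  using assms orthogonal_transformation_matrix[of "(*v) Q"]
  unfolding orthogonal_transformation_def by simp

lemma orthogonal_matrix_transpose_mult:
  fixes Q :: "real^'n^'n"
  assumes "orthogonal_matrix Q"
  shows "Q *v (transpose Q *v x) = x" "transpose Q *v (Q *v x) = x"
  using assms unfolding orthogonal_matrix_def
  by (metis matrix_vector_mul_assoc matrix_vector_mul_lid)+

lemma rotation_orthogonal_matrix: "rotation R \<Longrightarrow> orthogonal_matrix R"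
  unfolding rotation_def by simp

lemma rotation_id: "rotation (mat 1)"
  unfolding rotation_def by (simp add: orthogonal_matrix_id)

lemma rotation_mult: "rotation R \<Longrightarrow> rotation R' \<Longrightarrow> rotation (R' ** R)"
  unfolding rotation_def by (simp add: orthogonal_matrix_mul det_mul)

lemma rotation_transpose: "rotation R \<Longrightarrow> rotation (transpose R)"
  unfolding rotation_def by simp

lemma norm_rotation:
  fixes R :: "real^'n^'n"
  assumes "rotation R"
  shows "norm R = sqrt (real CARD('n))"
proof -
  have "norm (R $ i) = 1" for i
  proof -
    have "row i R = R $ i"
      by (simp add: row_def vec_eq_iff)
    then show ?thesis
      using assms orthogonal_matrix_orthonormal_rows unfolding rotation_def by metis
  qed
  then show ?thesis
    by (simp add: norm_vec_def L2_set_constant)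
qed

lemma compact_rotations: "compact {R :: real^'n^'n. rotation R}"
proof -
  have rotations_eq: "{R :: real^'n^'n. rotation R} =
     {R. \<forall>i j. (\<Sum>k\<in>UNIV. R$k$i * R$k$j) = (if i = j then 1 else 0)} \<inter>
     {R. (\<Sum>p\<in>{p. p permutes (UNIV::'n set)}. of_int (sign p) * (\<Prod>i\<in>UNIV. R$i$p i)) = 1}"
    unfolding rotation_def orthogonal_matrix det_def
    by (auto simp: vec_eq_iff matrix_matrix_mult_def transpose_def mat_def)
  have "closed {R :: real^'n^'n. rotation R}"
    unfolding rotations_eq
    by (intro closed_Int closed_Collect_all closed_Collect_eq continuous_intros)
  moreover have "bounded {R :: real^'n^'n. rotation R}"
    unfolding bounded_iff by (intro exI[of _ "sqrt (real CARD('n))"]) (simp add: norm_rotation)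
  ultimately show ?thesis
    by (simp add: compact_eq_bounded_closed)
qed

section \<open>Lattices\<close>

definition int_vec :: "real^'n \<Rightarrow> bool" where
  "int_vec x \<longleftrightarrow> (\<forall>i. x $ i \<in> \<int>)"

lemma mem_lattice_gen: "q \<in> lattice_gen B \<longleftrightarrow> (\<exists>x. int_vec x \<and> q = B *v x)"
  unfolding lattice_gen_def int_vec_def by auto

lemma norm_int_vec_ge_1:
  assumes "int_vec x" "x \<noteq> 0"
  shows "1 \<le> norm x"
proof -
  obtain i where "x $ i \<noteq> 0"
    using assms(2) by (metis vec_eq_iff zero_index)
  then have "1 \<le> \<bar>x $ i\<bar>"
    using assms(1) Ints_nonzero_abs_ge1 unfolding int_vec_def by blast
  then show ?thesis
    using component_le_norm_cart[of x i] by linarith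
qed

lemma zero_in_lattice_gen: "0 \<in> lattice_gen B"
  unfolding mem_lattice_gen int_vec_def by (rule exI[of _ 0]) auto

lemma lattice_gen_add: "a \<in> lattice_gen B \<Longrightarrow> b \<in> lattice_gen B \<Longrightarrow> a + b \<in> lattice_gen B"
  unfolding mem_lattice_gen int_vec_def
  by (metis Ints_add matrix_vector_right_distrib vector_add_component)

lemma lattice_gen_diff: "a \<in> lattice_gen B \<Longrightarrow> b \<in> lattice_gen B \<Longrightarrow> a - b \<in> lattice_gen B"
  unfolding mem_lattice_gen int_vec_def
  by (metis Ints_diff matrix_vector_mult_diff_distrib vector_minus_component)

lemma matrix_image_lattice_gen: "(\<lambda>p. R *v p) ` lattice_gen B = lattice_gen (R ** B)"
  unfolding lattice_gen_def by (simp add: setcompr_eq_image image_image matrix_vector_mul_assoc)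

lemma lattice_gen_norm_ge:
  assumes "\<And>x. norm x \<le> K * norm (B *v x)"
    and "q \<in> lattice_gen B" "q \<noteq> 0"
  shows "1 \<le> K * norm q"
proof -
  obtain x where x: "int_vec x" "q = B *v x"
    using assms(2) mem_lattice_gen by blast
  then have "1 \<le> norm x"
    using assms(3) norm_int_vec_ge_1 by (metis matrix_vector_mult_0_right)
  also have "\<dots> \<le> K * norm q"
    using assms(1) x(2) by simp
  finally show ?thesis .
qed

lemma finite_lattice_gen_bounded:
  assumes K: "\<And>x. norm x \<le> K * norm (B *v x)" "K > 0"
  shows "finite {q \<in> lattice_gen B. norm q \<le> r}"
proof (rule ccontr)
  let ?S = "{q \<in> lattice_gen B. norm q \<le> r}"
  assume "infinite ?S"
  moreover have "bounded ?S"
    unfolding bounded_iff by blast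
  ultimately obtain z where "z islimpt ?S"
    using bounded_infinite_imp_islimpt[of ?S ?S] by blast
  moreover have "\<not> z islimpt ?S"
  proof (rule discrete_imp_not_islimpt[of "1 / K"])
    fix p q assume "p \<in> ?S" "q \<in> ?S" "dist q p < 1 / K"
    then show "q = p"
      using lattice_gen_norm_ge[OF K(1) lattice_gen_diff, of q p] K(2)
      by (auto simp: dist_norm field_simps)
  qed (use K in simp)
  ultimately show False
    by blast
qed

lemma lattice_gen_covering:
  fixes B :: "real^'n^'n"
  assumes "invertible B"
  shows "\<exists>q\<in>lattice_gen B. norm (p - q) \<le> norm B * CARD('n)"
proof -
  obtain B' where B': "B ** B' = mat 1"
    using assms unfolding invertible_def by blast
  define y where "y = B' *v p"
  define x :: "real^'n" where "x = (\<chi> i. of_int \<lfloor>y $ i\<rfloor>)"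
  have "norm (y - x) \<le> (\<Sum>i\<in>UNIV. \<bar>(y - x) $ i\<bar>)"
    by (rule norm_le_l1_cart)
  also have "\<dots> \<le> (\<Sum>i\<in>(UNIV::'n set). 1)"
    by (rule sum_mono) (simp add: x_def, linarith)
  finally have "norm (y - x) \<le> CARD('n)"
    by simp
  moreover have "p - B *v x = B *v (y - x)"
    by (simp add: y_def matrix_vector_mul_assoc B' matrix_vector_mult_diff_distrib)
  ultimately have "norm (p - B *v x) \<le> norm B * CARD('n)"
    using norm_matrix_vector_mult_le[of B "y - x"] by (metis mult_left_mono norm_ge_zero order_trans)
  moreover have "B *v x \<in> lattice_gen B"
    unfolding mem_lattice_gen by (intro exI[of _ x]) (simp add: x_def int_vec_def)
  ultimately show ?thesis
    by blast
qed

lemma is_latticeE: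
  assumes "is_lattice L"
  obtains B K where "invertible B" "L = lattice_gen B" "K > 0" "\<And>x. norm x \<le> K * norm (B *v x)"
  using assms invertible_matrix_lower_bound unfolding is_lattice_def by metis

lemma is_lattice_lattice_gen: "invertible B \<Longrightarrow> is_lattice (lattice_gen B)"
  unfolding is_lattice_def by blast

lemma is_lattice_matrix_image:
  fixes R :: "real^'n^'n"
  assumes "invertible R" "is_lattice L"
  shows "is_lattice ((\<lambda>p. R *v p) ` L)"
proof -
  obtain B where "invertible B" "L = lattice_gen B"
    using assms(2) unfolding is_lattice_def by blast
  then show ?thesis
    unfolding is_lattice_def using assms(1) invertible_mult matrix_image_lattice_gen by blast
qed

section \<open>Voronoi cells\<close>

lemma mem_voronoi_iff: "p \<in> voronoi L \<longleftrightarrow> (\<forall>q\<in>L - {0}. 2 * (p \<bullet> q) \<le> q \<bullet> q)"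
proof -
  have "dist p 0 \<le> dist p q \<longleftrightarrow> 2 * (p \<bullet> q) \<le> q \<bullet> q" for q
    by (simp add: dist_norm norm_le inner_diff inner_commute)
  then show ?thesis
    unfolding voronoi_def by auto
qed

lemma voronoi_ineq: "p \<in> voronoi L \<Longrightarrow> q \<in> L \<Longrightarrow> 2 * (p \<bullet> q) \<le> q \<bullet> q"
  unfolding mem_voronoi_iff by (cases "q = 0") auto

lemma closed_voronoi: "closed (voronoi L)"
proof -
  have "voronoi L = (\<Inter>q\<in>L - {0}. {p. dist p 0 \<le> dist p q})"
    unfolding voronoi_def by auto
  then show ?thesis
    by (auto intro!: closed_Collect_le continuous_intros)
qed

lemma norm_voronoi_lattice_gen_le:
  fixes B :: "real^'n^'n"
  assumes "invertible B" "p \<in> voronoi (lattice_gen B)"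
  shows "norm p \<le> norm B * CARD('n)"
proof -
  obtain q where q: "q \<in> lattice_gen B" "norm (p - q) \<le> norm B * CARD('n)"
    using lattice_gen_covering assms(1) by blast
  have "norm p \<le> norm (p - q)"
    using assms(2) q(1) unfolding voronoi_def by (cases "q = 0") (auto simp: dist_norm)
  then show ?thesis
    using q(2) by linarith
qed

lemma cball_subset_voronoi_lattice_gen:
  fixes B :: "real^'n^'n"
  assumes K: "\<And>x. norm x \<le> K * norm (B *v x)" "K > 0"
  shows "cball 0 (1 / (2 * K)) \<subseteq> voronoi (lattice_gen B)"
proof
  fix p :: "real^'n" assume "p \<in> cball 0 (1 / (2 * K))"
  then have p: "2 * norm p \<le> 1 / K"
    using K(2) by (simp add: field_simps)
  show "p \<in> voronoi (lattice_gen B)"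
    unfolding mem_voronoi_iff
  proof
    fix q assume "q \<in> lattice_gen B - {0}"
    then have q: "1 / K \<le> norm q"
      using lattice_gen_norm_ge[OF K(1)] K(2) by (auto simp: field_simps)
    have "2 * (p \<bullet> q) \<le> 2 * norm p * norm q"
      using norm_cauchy_schwarz[of p q] by simp
    also have "\<dots> \<le> norm q * norm q"
      using p q by (metis mult_right_mono norm_ge_zero order_trans)
    also have "\<dots> = q \<bullet> q"
      by (simp add: dot_square_norm power2_eq_square)
    finally show "2 * (p \<bullet> q) \<le> q \<bullet> q" .
  qed
qed

lemma bounded_voronoi: "is_lattice L \<Longrightarrow> bounded (voronoi L)"
  unfolding bounded_iff by (metis is_latticeE norm_voronoi_lattice_gen_le)

lemma compact_voronoi: "is_lattice L \<Longrightarrow> compact (voronoi L)"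
  by (simp add: bounded_voronoi closed_voronoi compact_eq_bounded_closed)

lemma cball_subset_voronoi:
  assumes "is_lattice L"
  obtains m where "m > 0" "cball 0 m \<subseteq> voronoi L"
proof -
  obtain B K where "L = lattice_gen B" "K > 0" "\<And>x. norm x \<le> K * norm (B *v x)"
    using assms is_latticeE by metis
  then show thesis
    using that[of "1 / (2 * K)"] cball_subset_voronoi_lattice_gen by auto
qed

lemma voronoi_image_similarity:
  fixes f :: "real^'n \<Rightarrow> real^'n"
  assumes "bij f" and f: "\<And>x y. f x \<bullet> f y = k * (x \<bullet> y)" and "k > 0"
  shows "voronoi (f ` L) = f ` voronoi L"
proof -
  have f_eq_0: "f q = 0 \<longleftrightarrow> q = 0" for q
    using f[of q q] \<open>k > 0\<close> by (metis inner_eq_zero_iff mult_eq_0_iff order_less_irrefl)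
  have mem: "f u \<in> voronoi (f ` L) \<longleftrightarrow> u \<in> voronoi L" for u
  proof -
    have "f u \<in> voronoi (f ` L) \<longleftrightarrow> (\<forall>q\<in>L - {0}. 2 * (f u \<bullet> f q) \<le> f q \<bullet> f q)"
      unfolding mem_voronoi_iff using f_eq_0 by blast
    also have "\<dots> \<longleftrightarrow> (\<forall>q\<in>L - {0}. k * (2 * (u \<bullet> q)) \<le> k * (q \<bullet> q))"
      by (simp add: f algebra_simps)
    also have "\<dots> \<longleftrightarrow> u \<in> voronoi L"
      unfolding mem_voronoi_iff using \<open>k > 0\<close> by simp
    finally show ?thesis .
  qed
  show ?thesis
  proof (intro set_eqI iffI)
    fix x assume "x \<in> voronoi (f ` L)"
    moreover have "x = f (inv f x)"
      using \<open>bij f\<close> by (simp add: bij_is_surj surj_f_inv_f)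
    ultimately show "x \<in> f ` voronoi L"
      using mem by (metis image_eqI)
  qed (use mem in blast)
qed

lemma voronoi_rotate:
  fixes R :: "real^'n^'n"
  assumes "orthogonal_matrix R"
  shows "voronoi ((\<lambda>p. R *v p) ` L) = (\<lambda>p. R *v p) ` voronoi L"
proof (rule voronoi_image_similarity[where k = 1])
  show "bij (\<lambda>p. R *v p)"
    by (rule o_bij[of "\<lambda>p. transpose R *v p"])
       (auto simp: fun_eq_iff orthogonal_matrix_transpose_mult[OF assms] simp del: transpose_matrix_vector)
qed (simp_all add: inner_orthogonal_matrix_mult[OF assms])

lemma voronoi_scale:
  fixes L :: "(real^'n) set"
  assumes "c > 0"
  shows "voronoi ((\<lambda>p. c *\<^sub>R p) ` L) = (\<lambda>p. c *\<^sub>R p) ` voronoi L"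
proof (rule voronoi_image_similarity[where k = "c * c"])
  show "bij (\<lambda>p::real^'n. c *\<^sub>R p)"
    by (rule o_bij[of "\<lambda>p. (1 / c) *\<^sub>R p"]) (use assms in auto)
qed (use assms in auto)

section \<open>Admissible scales\<close>

definition scales :: "(real^'n) set \<Rightarrow> (real^'n) set \<Rightarrow> real set" where
  "scales L L' = {s. s > 0 \<and> (\<exists>R. rotation R \<and> (\<lambda>p. R *v p) ` voronoi L \<subseteq> (\<lambda>p. s *\<^sub>R p) ` voronoi L')}"

lemma scale_eq_Inf_scales: "scale L L' = Inf (scales L L')"
  unfolding scale_def scales_def ..

lemma scales_pos: "s \<in> scales L L' \<Longrightarrow> s > 0"
  unfolding scales_def by simp

lemma bdd_below_scales: "bdd_below (scales L L')"
  unfolding scales_def by (rule bdd_belowI[of _ 0]) auto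

lemma scale_le: "s \<in> scales L L' \<Longrightarrow> scale L L' \<le> s"
  unfolding scale_eq_Inf_scales by (rule cInf_lower[OF _ bdd_below_scales])

lemma scales_mult:
  assumes "s \<in> scales L L'" "t \<in> scales L' L''"
  shows "s * t \<in> scales L L''"
proof -
  obtain R where R: "rotation R" "(\<lambda>p. R *v p) ` voronoi L \<subseteq> (\<lambda>p. s *\<^sub>R p) ` voronoi L'"
    using assms(1) unfolding scales_def by blast
  obtain R' where R': "rotation R'" "(\<lambda>p. R' *v p) ` voronoi L' \<subseteq> (\<lambda>p. t *\<^sub>R p) ` voronoi L''"
    using assms(2) unfolding scales_def by blast
  have "(\<lambda>p. (R' ** R) *v p) ` voronoi L = (\<lambda>p. R' *v p) ` (\<lambda>p. R *v p) ` voronoi L"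
    by (simp add: image_image matrix_vector_mul_assoc)
  also have "\<dots> \<subseteq> (\<lambda>p. R' *v p) ` (\<lambda>p. s *\<^sub>R p) ` voronoi L'"
    using R(2) by (rule image_mono)
  also have "\<dots> = (\<lambda>p. s *\<^sub>R p) ` (\<lambda>p. R' *v p) ` voronoi L'"
    by (simp add: image_image matrix_vector_mult_scaleR)
  also have "\<dots> \<subseteq> (\<lambda>p. s *\<^sub>R p) ` (\<lambda>p. t *\<^sub>R p) ` voronoi L''"
    using R'(2) by (rule image_mono)
  also have "\<dots> = (\<lambda>p. (s * t) *\<^sub>R p) ` voronoi L''"
    by (simp add: image_image)
  finally show ?thesis
    using assms rotation_mult[OF R(1) R'(1)] unfolding scales_def by auto
qed

lemma scales_scaleR_image:
  fixes L L' :: "(real^'n) set"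
  assumes "c > 0"
  shows "scales ((\<lambda>p. c *\<^sub>R p) ` L) ((\<lambda>p. c *\<^sub>R p) ` L') = scales L L'"
proof -
  have inj: "inj (\<lambda>p::real^'n. c *\<^sub>R p)"
    using assms by (simp add: inj_on_def)
  have "(\<lambda>p. R *v p) ` (\<lambda>p. c *\<^sub>R p) ` V \<subseteq> (\<lambda>p. s *\<^sub>R p) ` (\<lambda>p. c *\<^sub>R p) ` V'
     \<longleftrightarrow> (\<lambda>p. R *v p) ` V \<subseteq> (\<lambda>p. s *\<^sub>R p) ` V'" for R :: "real^'n^'n" and s V V'
  proof -
    have "(\<lambda>p. R *v p) ` (\<lambda>p. c *\<^sub>R p) ` V = (\<lambda>p. c *\<^sub>R p) ` (\<lambda>p. R *v p) ` V"
      by (simp add: image_image matrix_vector_mult_scaleR)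
    moreover have "(\<lambda>p. s *\<^sub>R p) ` (\<lambda>p. c *\<^sub>R p) ` V' = (\<lambda>p. c *\<^sub>R p) ` (\<lambda>p. s *\<^sub>R p) ` V'"
      by (simp add: image_image mult.commute)
    ultimately show ?thesis
      using inj_image_subset_iff[OF inj] by simp
  qed
  then show ?thesis
    unfolding scales_def voronoi_scale[OF assms] by simp
qed

lemma scales_nonempty:
  assumes "is_lattice L" "is_lattice L'"
  shows "scales L L' \<noteq> {}"
proof -
  obtain C where C: "C > 0" "\<And>p. p \<in> voronoi L \<Longrightarrow> norm p \<le> C"
    using bounded_voronoi[OF assms(1)] bounded_pos by blast
  obtain m where m: "m > 0" "cball 0 m \<subseteq> voronoi L'"
    using cball_subset_voronoi[OF assms(2)] by blast
  have "(\<lambda>p. mat 1 *v p) ` voronoi L \<subseteq> (\<lambda>p. (C / m) *\<^sub>R p) ` voronoi L'"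
  proof
    fix x assume "x \<in> (\<lambda>p. mat 1 *v p) ` voronoi L"
    then have "norm x \<le> C"
      using C(2) by auto
    then have "norm ((1 / (C / m)) *\<^sub>R x) \<le> m"
      using C(1) m(1) by (simp add: field_simps)
    then have "(1 / (C / m)) *\<^sub>R x \<in> voronoi L'"
      using m(2) by auto
    moreover have "C / m \<noteq> 0"
      using C(1) m(1) by simp
    ultimately show "x \<in> (\<lambda>p. (C / m) *\<^sub>R p) ` voronoi L'"
      using mem_scaleR_image_iff by blast
  qed
  then have "C / m \<in> scales L L'"
    unfolding scales_def using C(1) m(1) rotation_id by (auto intro!: exI[of _ "mat 1"])
  then show ?thesis
    by blast
qed

lemma norm_preserving_image_subset_scaleR_ge_1:
  fixes V :: "'a::real_normed_vector set"
  assumes "bounded V" "p \<in> V" "p \<noteq> 0" "c > 0"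
    and f: "\<And>x. norm (f x) = norm x" "f ` V \<subseteq> (\<lambda>v. c *\<^sub>R v) ` V"
  shows "1 \<le> c"
proof -
  define r where "r = Sup (norm ` V)"
  have bdd: "bdd_above (norm ` V)"
    using assms(1) by (meson bdd_aboveI2 bounded_iff)
  have "norm p \<le> r"
    unfolding r_def using cSup_upper[OF imageI[OF assms(2)] bdd] .
  moreover have "0 < norm p"
    using assms(3) by simp
  ultimately have "r > 0"
    by linarith
  have "norm x \<le> c * r" if "x \<in> V" for x
  proof -
    have "f x \<in> (\<lambda>v. c *\<^sub>R v) ` V"
      using f(2) that by (rule subsetD[OF _ imageI])
    then obtain v where "v \<in> V" "f x = c *\<^sub>R v"
      by (rule imageE)
    then have "norm x = c * norm v"
      using f(1)[of x] assms(4) by simp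
    also have "\<dots> \<le> c * r"
      unfolding r_def using cSup_upper[OF imageI[OF \<open>v \<in> V\<close>] bdd] assms(4) by simp
    finally show ?thesis .
  qed
  then have "r \<le> c * r"
    unfolding r_def using assms(2) by (intro cSup_least) auto
  then show ?thesis
    using \<open>r > 0\<close> by simp
qed

lemma scales_self_ge_1:
  assumes "is_lattice L" "s \<in> scales L L"
  shows "1 \<le> s"
proof -
  obtain R where R: "rotation R" "(\<lambda>p. R *v p) ` voronoi L \<subseteq> (\<lambda>p. s *\<^sub>R p) ` voronoi L"
    using assms(2) unfolding scales_def by blast
  obtain m where m: "m > 0" "cball 0 m \<subseteq> voronoi L"
    using cball_subset_voronoi[OF assms(1)] by blast
  obtain p :: "real^'a" where "norm p = m"
    using vector_choose_size[of m] m(1) by auto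
  then have "p \<in> voronoi L" "p \<noteq> 0"
    using m by auto
  then show ?thesis
    using norm_preserving_image_subset_scaleR_ge_1[OF bounded_voronoi[OF assms(1)] _ _
        scales_pos[OF assms(2)] _ R(2)]
      norm_orthogonal_matrix_mult[OF rotation_orthogonal_matrix[OF R(1)]] by blast
qed

lemma scale_pos:
  assumes "is_lattice L" "is_lattice L'"
  shows "scale L L' > 0"
proof -
  obtain t where t: "t \<in> scales L' L"
    using scales_nonempty[OF assms(2,1)] by blast
  have "1 / t \<le> scale L L'"
    unfolding scale_eq_Inf_scales
  proof (rule cInf_greatest)
    show "scales L L' \<noteq> {}"
      using scales_nonempty[OF assms] .
    fix s assume "s \<in> scales L L'"
    then have "1 \<le> s * t"
      using scales_self_ge_1[OF assms(1) scales_mult] t by blast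
    then show "1 / t \<le> s"
      using scales_pos[OF t] by (simp add: pos_divide_le_eq)
  qed
  moreover have "0 < 1 / t"
    using scales_pos[OF t] by simp
  ultimately show ?thesis
    by linarith
qed

lemma rotated_voronoi_subset_limit:
  fixes R :: "nat \<Rightarrow> real^'n^'n"
  assumes R: "\<And>k. (\<lambda>p. R k *v p) ` voronoi L \<subseteq> (\<lambda>p. s k *\<^sub>R p) ` voronoi L'" "R \<longlonglongrightarrow> l"
    and s: "\<And>k. s k > 0" "s \<longlonglongrightarrow> a" "a > 0"
  shows "(\<lambda>p. l *v p) ` voronoi L \<subseteq> (\<lambda>p. a *\<^sub>R p) ` voronoi L'"
proof
  fix x assume "x \<in> (\<lambda>p. l *v p) ` voronoi L"
  then obtain p where p: "p \<in> voronoi L" "x = l *v p"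
    by blast
  have "(1 / s k) *\<^sub>R (R k *v p) \<in> voronoi L'" for k
  proof -
    have "R k *v p \<in> (\<lambda>p. s k *\<^sub>R p) ` voronoi L'"
      using R(1) p(1) by blast
    then show ?thesis
      using mem_scaleR_image_iff[of "s k"] s(1) by (metis less_irrefl)
  qed
  moreover have "(\<lambda>k. (1 / s k) *\<^sub>R (R k *v p)) \<longlonglongrightarrow> (1 / a) *\<^sub>R x"
  proof -
    have "(\<lambda>k. 1 / s k) \<longlonglongrightarrow> 1 / a"
      using s(2,3) by (intro tendsto_divide tendsto_const) auto
    moreover have "(\<lambda>k. R k *v p) \<longlonglongrightarrow> l *v p"
      using R(2) unfolding matrix_vector_mult_def by (intro tendsto_intros)
    ultimately show ?thesis
      using tendsto_scaleR p(2) by blast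
  qed
  ultimately have "(1 / a) *\<^sub>R x \<in> voronoi L'"
    by (rule closed_sequentially[OF closed_voronoi])
  then show "x \<in> (\<lambda>p. a *\<^sub>R p) ` voronoi L'"
    using mem_scaleR_image_iff s(3) by (metis order_less_irrefl)
qed

lemma scale_in_scales:
  assumes "is_lattice L" "is_lattice L'"
  shows "scale L L' \<in> scales L L'"
proof -
  have "scale L L' \<in> closure (scales L L')"
    unfolding scale_eq_Inf_scales
    using closure_contains_Inf[OF scales_nonempty[OF assms] bdd_below_scales] .
  then obtain s where s: "\<And>k. s k \<in> scales L L'" "s \<longlonglongrightarrow> scale L L'"
    unfolding closure_sequential by blast
  then have "\<forall>k. \<exists>R. rotation R \<and> (\<lambda>p. R *v p) ` voronoi L \<subseteq> (\<lambda>p. s k *\<^sub>R p) ` voronoi L'"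
    unfolding scales_def by blast
  then obtain R where R: "\<And>k. rotation (R k)"
    "\<And>k. (\<lambda>p. R k *v p) ` voronoi L \<subseteq> (\<lambda>p. s k *\<^sub>R p) ` voronoi L'"
    by metis
  obtain l r where l: "rotation l" "strict_mono r" "(R \<circ> r) \<longlonglongrightarrow> l"
    using compact_rotations R(1) unfolding compact_def by (metis mem_Collect_eq)
  have "(\<lambda>p. l *v p) ` voronoi L \<subseteq> (\<lambda>p. scale L L' *\<^sub>R p) ` voronoi L'"
  proof (rule rotated_voronoi_subset_limit)
    show "(\<lambda>p. (R \<circ> r) k *v p) ` voronoi L \<subseteq> (\<lambda>p. (s \<circ> r) k *\<^sub>R p) ` voronoi L'" for k
      using R(2) by simp
    show "(s \<circ> r) \<longlonglongrightarrow> scale L L'"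
      using LIMSEQ_subseq_LIMSEQ[OF s(2) l(2)] .
  qed (use l(3) scales_pos[OF s(1)] scale_pos[OF assms] in \<open>auto simp: comp_def\<close>)
  then show ?thesis
    unfolding scales_def using scale_pos[OF assms] l(1) by blast
qed

lemma scale_mult_le:
  assumes "is_lattice L" "is_lattice L'" "is_lattice L''"
  shows "scale L L'' \<le> scale L L' * scale L' L''"
  using scale_le scales_mult scale_in_scales assms by blast

lemma scale_mult_scale_ge_1:
  assumes "is_lattice L" "is_lattice L'"
  shows "1 \<le> scale L L' * scale L' L"
  using scales_self_ge_1 scales_mult scale_in_scales assms by blast

lemma ds_le_ln:
  assumes "is_lattice L" "is_lattice L'" "s \<in> scales L L'" "s \<in> scales L' L"
  shows "ds L L' \<le> ln s"
  unfolding ds_def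
  using scale_le[OF assms(3)] scale_le[OF assms(4)] scale_pos[OF assms(1,2)] scale_pos[OF assms(2,1)]
  by (subst ln_le_cancel_iff) auto

lemma ds_nonneg:
  assumes "is_lattice L" "is_lattice L'"
  shows "0 \<le> ds L L'"
proof -
  have "1 \<le> max (scale L L') (scale L' L)"
  proof (rule ccontr)
    assume "\<not> ?thesis"
    then have "scale L L' * scale L' L < 1 * 1"
      using scale_pos[OF assms(2,1)] by (intro mult_strict_mono) auto
    then show False
      using scale_mult_scale_ge_1[OF assms] by simp
  qed
  then show ?thesis
    unfolding ds_def by simp
qed

lemma ds_sym: "ds L L' = ds L' L"
  unfolding ds_def by (simp add: max.commute)

lemma ds_triangle:
  assumes "is_lattice L" "is_lattice L'" "is_lattice L''"
  shows "ds L L'' \<le> ds L L' + ds L' L''"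
proof -
  define M1 where "M1 = max (scale L L') (scale L' L)"
  define M2 where "M2 = max (scale L' L'') (scale L'' L')"
  have pos: "scale L L' > 0" "scale L' L > 0" "scale L' L'' > 0" "scale L'' L' > 0"
    "scale L L'' > 0" "scale L'' L > 0"
    using scale_pos assms by blast+
  then have "M1 > 0" "M2 > 0"
    unfolding M1_def M2_def by auto
  have "scale L L'' \<le> scale L L' * scale L' L''"
    using scale_mult_le assms by blast
  also have "\<dots> \<le> M1 * M2"
    unfolding M1_def M2_def using pos by (intro mult_mono) auto
  finally have "scale L L'' \<le> M1 * M2" .
  moreover have "scale L'' L \<le> scale L'' L' * scale L' L"
    using scale_mult_le assms by blast
  moreover have "\<dots> \<le> M1 * M2"
    unfolding M1_def M2_def using pos by (subst mult.commute, intro mult_mono) auto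
  ultimately have "ln (max (scale L L'') (scale L'' L)) \<le> ln (M1 * M2)"
    using pos \<open>M1 > 0\<close> \<open>M2 > 0\<close> by (subst ln_le_cancel_iff) auto
  also have "\<dots> = ln M1 + ln M2"
    using \<open>M1 > 0\<close> \<open>M2 > 0\<close> by (simp add: ln_mult)
  finally show ?thesis
    unfolding ds_def M1_def M2_def .
qed

lemma ds_scaleR_image:
  fixes L L' :: "(real^'n) set"
  assumes "c > 0"
  shows "ds ((\<lambda>p. c *\<^sub>R p) ` L) ((\<lambda>p. c *\<^sub>R p) ` L') = ds L L'"
  unfolding ds_def scale_eq_Inf_scales scales_scaleR_image[OF assms] ..

lemma ds_eq_0_if_rotate:
  assumes "is_lattice L" "is_lattice L'" "rotation R" "(\<lambda>p. R *v p) ` L = L'"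
  shows "ds L L' = 0"
proof -
  have R: "orthogonal_matrix R"
    using assms(3) by (rule rotation_orthogonal_matrix)
  have V': "voronoi L' = (\<lambda>p. R *v p) ` voronoi L"
    using voronoi_rotate[OF R, of L] unfolding assms(4) .
  then have "(\<lambda>p. transpose R *v p) ` voronoi L' = voronoi L"
    by (simp add: image_image orthogonal_matrix_transpose_mult[OF R] del: transpose_matrix_vector)
  then have "1 \<in> scales L' L"
    unfolding scales_def using rotation_transpose[OF assms(3)] by (auto intro!: exI[of _ "transpose R"])
  moreover have "1 \<in> scales L L'"
    unfolding scales_def V' using assms(3) by auto
  ultimately have "ds L L' \<le> ln 1"
    using ds_le_ln assms(1,2) by blast
  then show ?thesis
    using ds_nonneg[OF assms(1,2)] by simp
qed

section \<open>A Voronoi cell determines its lattice\<close>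

lemma voronoi_ineqs_persist:
  fixes B :: "real^'n^'n"
  assumes K: "\<And>x. norm x \<le> K * norm (B *v x)" "K > 0"
    and strict: "\<And>m. m \<in> lattice_gen B - {0} - E \<Longrightarrow> 2 * (x \<bullet> m) < m \<bullet> m"
  obtains d where "d > 0"
    "\<And>w m. norm w < d \<Longrightarrow> m \<in> lattice_gen B - {0} - E \<Longrightarrow> 2 * ((x + w) \<bullet> m) \<le> m \<bullet> m"
proof -
  define F where "F = {m \<in> lattice_gen B. norm m \<le> 2 * norm x + 1} - {0} - E"
  define U where "U = ball 0 (1/2) \<inter> (\<Inter>m\<in>F. {w. 2 * ((x + w) \<bullet> m) < m \<bullet> m})"
  have "finite F"
    unfolding F_def using finite_lattice_gen_bounded[OF K] by (rule finite_subset[rotated]) auto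
  then have "open U"
    unfolding U_def by (intro open_Int open_INT ballI open_Collect_less continuous_intros) auto
  moreover have "0 \<in> U"
    unfolding U_def F_def using strict by auto
  ultimately obtain d where "d > 0" "ball 0 d \<subseteq> U"
    using open_contains_ball by blast
  moreover have "2 * ((x + w) \<bullet> m) \<le> m \<bullet> m"
    if "w \<in> U" "m \<in> lattice_gen B - {0} - E" for w m
  proof (cases "m \<in> F")
    case True
    then show ?thesis
      using that(1) unfolding U_def by auto
  next
    case False
    then have "2 * norm x + 1 < norm m"
      using that(2) unfolding F_def by auto
    moreover have "norm w < 1/2"
      using that(1) unfolding U_def by simp
    ultimately have "2 * (norm x + norm w) * norm m \<le> norm m * norm m"
      by (intro mult_right_mono) auto
    moreover have "(x + w) \<bullet> m \<le> (norm x + norm w) * norm m"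
      using norm_cauchy_schwarz[of "x + w" m] mult_right_mono[OF norm_triangle_ineq norm_ge_zero]
      by (rule order_trans)
    ultimately have "2 * ((x + w) \<bullet> m) \<le> norm m * norm m"
      by (simp add: algebra_simps)
    then show ?thesis
      by (simp add: dot_square_norm power2_eq_square)
  qed
  ultimately show thesis
    using that by (auto simp: subset_iff dist_norm)
qed

lemma voronoi_tight_if_not_interior:
  fixes B :: "real^'n^'n"
  assumes K: "\<And>x. norm x \<le> K * norm (B *v x)" "K > 0"
    and x: "x \<in> voronoi (lattice_gen B)" "x \<notin> interior (voronoi (lattice_gen B))"
  obtains l where "l \<in> lattice_gen B" "l \<noteq> 0" "2 * (x \<bullet> l) = l \<bullet> l"
proof -
  have "\<exists>l\<in>lattice_gen B - {0}. 2 * (x \<bullet> l) = l \<bullet> l"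
  proof (rule ccontr)
    assume none: "\<not> ?thesis"
    have strict: "2 * (x \<bullet> m) < m \<bullet> m" if "m \<in> lattice_gen B - {0} - {}" for m
      using x(1) that none unfolding mem_voronoi_iff by force
    obtain d where d: "d > 0"
      "\<And>w m. norm w < d \<Longrightarrow> m \<in> lattice_gen B - {0} - {} \<Longrightarrow> 2 * ((x + w) \<bullet> m) \<le> m \<bullet> m"
      using voronoi_ineqs_persist[OF K strict] by blast
    have "ball x d \<subseteq> voronoi (lattice_gen B)"
    proof
      fix y assume "y \<in> ball x d"
      then have "norm (y - x) < d"
        by (simp add: dist_norm norm_minus_commute)
      then show "y \<in> voronoi (lattice_gen B)"
        unfolding mem_voronoi_iff using d(2)[of "y - x"] by simp
    qed
    then show False
      using x(2) d(1) mem_interior by blast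
  qed
  then show thesis
    using that by blast
qed

lemma half_not_in_interior_voronoi:
  assumes "q \<in> L" "q \<noteq> 0"
  shows "(1/2) *\<^sub>R q \<notin> interior (voronoi L)"
proof
  assume "(1/2) *\<^sub>R q \<in> interior (voronoi L)"
  then obtain e where "e > 0" "ball ((1/2) *\<^sub>R q) e \<subseteq> voronoi L"
    using mem_interior by blast
  moreover define t where "t = e / (2 * norm q)"
  ultimately have "(1/2) *\<^sub>R q + t *\<^sub>R q \<in> voronoi L"
    using assms(2) by (auto simp: subset_iff dist_norm)
  then have "2 * (((1/2) *\<^sub>R q + t *\<^sub>R q) \<bullet> q) \<le> q \<bullet> q"
    using assms unfolding mem_voronoi_iff by blast
  moreover have "t > 0"
    unfolding t_def using \<open>e > 0\<close> assms(2) by simp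
  moreover have "0 < t * (q \<bullet> q)"
    using \<open>t > 0\<close> assms(2) by simp
  ultimately show False
    by (simp add: inner_add_left algebra_simps)
qed

lemma parallel_if_local_halfspace_subset:
  fixes q l :: "'a::real_inner"
  assumes "q \<noteq> 0" "d > 0" and half: "\<And>w. norm w < d \<Longrightarrow> w \<bullet> q \<le> 0 \<Longrightarrow> w \<bullet> l \<le> 0"
  shows "l = ((l \<bullet> q) / (q \<bullet> q)) *\<^sub>R q"
proof -
  define u where "u = l - ((l \<bullet> q) / (q \<bullet> q)) *\<^sub>R q"
  have uq: "u \<bullet> q = 0"
    unfolding u_def using assms(1) by (simp add: inner_diff_left)
  have "u \<bullet> l = 0"
  proof (cases "u = 0")
    case False
    define t where "t = d / (2 * norm u)"
    have "norm (t *\<^sub>R u) < d" "norm (- (t *\<^sub>R u)) < d" "t > 0"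
      unfolding t_def using False assms(2) by simp_all
    then have "t * (u \<bullet> l) \<le> 0" "- (t * (u \<bullet> l)) \<le> 0"
      using half[of "t *\<^sub>R u"] half[of "- (t *\<^sub>R u)"] uq by simp_all
    then show ?thesis
      using \<open>t > 0\<close> by (simp add: zero_less_mult_iff order_antisym)
  qed simp
  then have "u \<bullet> u = 0"
    unfolding u_def using uq u_def by (simp add: inner_diff_left inner_diff_right)
  then show ?thesis
    unfolding u_def by simp
qed

text \<open>A lattice vector \<open>q\<close> is strictly Voronoi-relevant when \<open>q/2\<close> violates no other constraint of
  the Voronoi cell. Then \<open>q/2\<close> lies on a facet of the cell with normal \<open>q\<close>, so \<open>q\<close> can be
  recovered from the cell alone.\<close>

lemma relevant_vector_in_lattice_gen:
  fixes B1 B2 :: "real^'n^'n"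
  assumes K1: "\<And>x. norm x \<le> K1 * norm (B1 *v x)" "K1 > 0"
    and K2: "\<And>x. norm x \<le> K2 * norm (B2 *v x)" "K2 > 0"
    and V: "voronoi (lattice_gen B1) = voronoi (lattice_gen B2)"
    and q: "q \<in> lattice_gen B1" "q \<noteq> 0"
    and relevant: "\<And>m. m \<in> lattice_gen B1 - {0} - {q} \<Longrightarrow> q \<bullet> m < m \<bullet> m"
  shows "q \<in> lattice_gen B2"
proof -
  define x where "x = (1/2) *\<^sub>R q"
  have x2: "2 * (x \<bullet> m) = q \<bullet> m" for m
    unfolding x_def by simp
  have strict: "2 * (x \<bullet> m) < m \<bullet> m" if "m \<in> lattice_gen B1 - {0} - {q}" for m
    using relevant[OF that] x2 by simp
  obtain d where "d > 0"
    and d: "\<And>w m. norm w < d \<Longrightarrow> m \<in> lattice_gen B1 - {0} - {q} \<Longrightarrow> 2 * ((x + w) \<bullet> m) \<le> m \<bullet> m"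
    using voronoi_ineqs_persist[OF K1 strict] by blast
  have near: "x + w \<in> voronoi (lattice_gen B2)" if "norm w < d" "w \<bullet> q \<le> 0" for w
    unfolding V[symmetric] mem_voronoi_iff
  proof
    fix m assume "m \<in> lattice_gen B1 - {0}"
    then show "2 * ((x + w) \<bullet> m) \<le> m \<bullet> m"
      using d[OF that(1)] that(2) by (cases "m = q") (auto simp: inner_add_left x2)
  qed
  have "x \<in> voronoi (lattice_gen B2)"
    using near[of 0] \<open>d > 0\<close> by simp
  moreover have "x \<notin> interior (voronoi (lattice_gen B2))"
    unfolding x_def V[symmetric] using half_not_in_interior_voronoi q by blast
  ultimately obtain l where l: "l \<in> lattice_gen B2" "l \<noteq> 0" "2 * (x \<bullet> l) = l \<bullet> l"
    by (rule voronoi_tight_if_not_interior[OF K2])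
  have "w \<bullet> l \<le> 0" if "norm w < d" "w \<bullet> q \<le> 0" for w
    using voronoi_ineq[OF near[OF that] l(1)] l(3) by (simp add: inner_add_left)
  then have lc: "l = ((l \<bullet> q) / (q \<bullet> q)) *\<^sub>R q"
    using parallel_if_local_halfspace_subset q(2) \<open>d > 0\<close> by blast
  define c where "c = (l \<bullet> q) / (q \<bullet> q)"
  have l_eq: "l = c *\<^sub>R q"
    using lc unfolding c_def .
  have "q \<bullet> l = l \<bullet> l"
    using l(3) x2[of l] by simp
  then have "c * (q \<bullet> q) = (c * c) * (q \<bullet> q)"
    by (auto simp: l_eq)
  then have "c = c * c"
    using q(2) by simp
  then have "c = 1"
    using l(2) l_eq by auto
  then show ?thesis
    using l(1) l_eq by simp
qed

lemma norm_lt_if_inner_self_le: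
  fixes l m :: "'a::real_inner"
  assumes "m \<noteq> 0" "m \<noteq> l" "m \<bullet> m \<le> l \<bullet> m"
  shows "norm m < norm l" "norm (l - m) < norm l"
proof -
  have lm: "(l - m) \<bullet> (l - m) = l \<bullet> l - 2 * (l \<bullet> m) + m \<bullet> m"
    by (simp add: inner_diff_left inner_diff_right inner_commute)
  have "0 < m \<bullet> m" "0 < (l - m) \<bullet> (l - m)"
    using assms(1,2) by auto
  then show "norm m < norm l" "norm (l - m) < norm l"
    unfolding norm_lt using lm assms(3) by linarith+
qed

lemma lattice_gen_norm_induct:
  fixes B :: "real^'n^'n"
  assumes K: "\<And>x. norm x \<le> K * norm (B *v x)" "K > 0" and "l \<in> lattice_gen B"
    and step: "\<And>l. l \<in> lattice_gen B \<Longrightarrow> (\<And>m. m \<in> lattice_gen B \<Longrightarrow> norm m < norm l \<Longrightarrow> P m) \<Longrightarrow> P l"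
  shows "P l"
proof -
  define f where "f l = card {m \<in> lattice_gen B. norm m < norm l}" for l :: "real^'n"
  have f_less: "f m < f l" if "m \<in> lattice_gen B" "norm m < norm l" for m l
  proof -
    have "finite {m \<in> lattice_gen B. norm m < norm l}"
      using finite_lattice_gen_bounded[OF K, of "norm l"] by (rule finite_subset[rotated]) auto
    then show ?thesis
      unfolding f_def using that by (intro psubset_card_mono) auto
  qed
  show ?thesis
    using \<open>l \<in> lattice_gen B\<close>
  proof (induction l rule: measure_induct_rule[of f])
    case (less l)
    then show ?case
      using step f_less by blast
  qed
qed

lemma lattice_gen_subset_if_voronoi_eq:
  fixes B1 B2 :: "real^'n^'n"
  assumes K1: "\<And>x. norm x \<le> K1 * norm (B1 *v x)" "K1 > 0"
    and K2: "\<And>x. norm x \<le> K2 * norm (B2 *v x)" "K2 > 0"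
    and V: "voronoi (lattice_gen B1) = voronoi (lattice_gen B2)"
  shows "lattice_gen B1 \<subseteq> lattice_gen B2"
proof
  fix l assume "l \<in> lattice_gen B1"
  then show "l \<in> lattice_gen B2"
  proof (rule lattice_gen_norm_induct[OF K1, where P = "\<lambda>l. l \<in> lattice_gen B2"])
    fix l assume l: "l \<in> lattice_gen B1"
      and IH: "\<And>m. m \<in> lattice_gen B1 \<Longrightarrow> norm m < norm l \<Longrightarrow> m \<in> lattice_gen B2"
    consider "l = 0" | "l \<noteq> 0" "\<And>m. m \<in> lattice_gen B1 - {0} - {l} \<Longrightarrow> l \<bullet> m < m \<bullet> m"
      | m where "m \<in> lattice_gen B1" "m \<noteq> 0" "m \<noteq> l" "m \<bullet> m \<le> l \<bullet> m"
      using not_less by blast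
    then show "l \<in> lattice_gen B2"
    proof cases
      case 1
      then show ?thesis
        by (simp add: zero_in_lattice_gen)
    next
      case 2
      then show ?thesis
        using relevant_vector_in_lattice_gen[OF K1 K2 V l] by blast
    next
      case (3 m)
      then have "m \<in> lattice_gen B2" "l - m \<in> lattice_gen B2"
        using IH norm_lt_if_inner_self_le lattice_gen_diff[OF l] by blast+
      then show ?thesis
        using lattice_gen_add by fastforce
    qed
  qed
qed

lemma lattice_eq_if_voronoi_eq:
  assumes "is_lattice L" "is_lattice L'" "voronoi L = voronoi L'"
  shows "L = L'"
  using assms is_latticeE lattice_gen_subset_if_voronoi_eq by (metis subset_antisym)

section \<open>Lattices at distance zero\<close>

lemma compact_isometry_image_eq:
  fixes f :: "'a::metric_space \<Rightarrow> 'a"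
  assumes K: "compact K" and fK: "f ` K \<subseteq> K" and iso: "\<And>x y. dist (f x) (f y) = dist x y"
  shows "f ` K = K"
proof (rule ccontr)
  assume "f ` K \<noteq> K"
  then obtain p where p: "p \<in> K" "p \<notin> f ` K"
    using fK by blast
  have "continuous_on K f"
    unfolding continuous_on_iff using iso by metis
  then have "closed (f ` K)"
    using compact_continuous_image[OF _ K] compact_imp_closed by blast
  moreover have "f ` K \<noteq> {}"
    using p(1) by blast
  ultimately have d: "infdist p (f ` K) > 0"
    using in_closed_iff_infdist_zero[of "f ` K" p] p(2) infdist_nonneg by (metis less_eq_real_def)
  define x where "x k = (f ^^ k) p" for k
  have xK: "x k \<in> K" for k
    unfolding x_def by (induction k) (use p fK in auto)
  have iso_pow: "dist ((f ^^ i) a) ((f ^^ i) b) = dist a b" for i a b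
    by (induction i) (auto simp: iso)
  have far: "infdist p (f ` K) \<le> dist (x j) (x i)" if ij: "i < j" for i j
  proof -
    obtain m where m: "j = i + Suc m"
      using less_imp_Suc_add[OF ij] by auto
    have "x j = (f ^^ i) ((f ^^ Suc m) p)"
      unfolding x_def m by (simp only: funpow_add o_apply)
    then have "dist (x j) (x i) = dist ((f ^^ Suc m) p) p"
      unfolding x_def by (simp add: iso_pow)
    moreover have "(f ^^ Suc m) p \<in> f ` K"
      using xK[of m] unfolding x_def by simp
    then have "infdist p (f ` K) \<le> dist p ((f ^^ Suc m) p)"
      by (rule infdist_le)
    ultimately show ?thesis
      by (simp add: dist_commute)
  qed
  obtain l r where r: "strict_mono r" "(x \<circ> r) \<longlonglongrightarrow> l"
    using K xK unfolding compact_def by blast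
  have "Cauchy (x \<circ> r)"
    using r(2) by (rule LIMSEQ_imp_Cauchy)
  then obtain M where "dist ((x \<circ> r) (Suc M)) ((x \<circ> r) M) < infdist p (f ` K)"
    using d unfolding Cauchy_def by (meson le_Suc_eq order_refl)
  moreover have "r M < r (Suc M)"
    using r(1) by (simp add: strict_mono_def)
  ultimately show False
    using far by (simp add: not_le[symmetric])
qed

lemma one_in_scales_if_ds_eq_0:
  assumes "is_lattice L" "is_lattice L'" "ds L L' = 0"
  shows "1 \<in> scales L L'" "1 \<in> scales L' L"
proof -
  have pos: "scale L L' > 0" "scale L' L > 0"
    using scale_pos assms(1,2) by blast+
  then have "max (scale L L') (scale L' L) = 1"
    using assms(3) unfolding ds_def by simp
  moreover have "1 \<le> scale L L' * scale L' L"
    using scale_mult_scale_ge_1[OF assms(1,2)] .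
  ultimately have le: "scale L L' \<le> 1" "scale L' L \<le> 1" and prod: "1 \<le> scale L L' * scale L' L"
    by auto
  have "scale L L' * scale L' L \<le> scale L L'" "scale L L' * scale L' L \<le> scale L' L"
    using mult_left_mono[OF le(2)] mult_right_mono[OF le(1)] pos by auto
  then have "scale L L' = 1" "scale L' L = 1"
    using le prod by linarith+
  then show "1 \<in> scales L L'" "1 \<in> scales L' L"
    using scale_in_scales assms(1,2) by metis+
qed

lemma rotate_voronoi_if_one_in_scales:
  assumes "is_lattice L" "1 \<in> scales L L'" "1 \<in> scales L' L"
  obtains R where "rotation R" "(\<lambda>p. R *v p) ` voronoi L = voronoi L'"
proof -
  obtain R where R: "rotation R" "(\<lambda>p. R *v p) ` voronoi L \<subseteq> voronoi L'"
    using assms(2) unfolding scales_def by auto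
  obtain R' where R': "rotation R'" "(\<lambda>p. R' *v p) ` voronoi L' \<subseteq> voronoi L"
    using assms(3) unfolding scales_def by auto
  have "orthogonal_matrix (R' ** R)"
    using R(1) R'(1) rotation_orthogonal_matrix orthogonal_matrix_mul by blast
  then have "dist ((R' ** R) *v x) ((R' ** R) *v y) = dist x y" for x y
    using norm_orthogonal_matrix_mult[of _ "x - y"] by (simp add: dist_norm matrix_vector_mult_diff_distrib)
  moreover have "(\<lambda>p. (R' ** R) *v p) ` voronoi L \<subseteq> voronoi L"
    using R(2) R'(2) by (auto simp: matrix_vector_mul_assoc[symmetric])
  ultimately have onto: "(\<lambda>p. (R' ** R) *v p) ` voronoi L = voronoi L"
    using compact_isometry_image_eq[OF compact_voronoi[OF assms(1)]] by blast
  have "voronoi L' \<subseteq> (\<lambda>p. R *v p) ` voronoi L"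
  proof
    fix y assume "y \<in> voronoi L'"
    then obtain v where v: "v \<in> voronoi L" "R' *v y = R' *v (R *v v)"
      using R'(2) onto by (force simp: matrix_vector_mul_assoc)
    then have "y = R *v v"
      using orthogonal_matrix_transpose_mult(2)[OF rotation_orthogonal_matrix[OF R'(1)]] by metis
    then show "y \<in> (\<lambda>p. R *v p) ` voronoi L"
      using v(1) by blast
  qed
  then show thesis
    using that R by blast
qed

lemma rotate_if_ds_eq_0:
  assumes "is_lattice L" "is_lattice L'" "ds L L' = 0"
  obtains R where "rotation R" "(\<lambda>p. R *v p) ` L = L'"
proof -
  obtain R where R: "rotation R" "(\<lambda>p. R *v p) ` voronoi L = voronoi L'"
    using rotate_voronoi_if_one_in_scales[OF assms(1) one_in_scales_if_ds_eq_0[OF assms]] by blast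
  have "orthogonal_matrix R"
    using R(1) by (rule rotation_orthogonal_matrix)
  then have "invertible R"
    unfolding orthogonal_matrix_def invertible_def by blast
  have "voronoi ((\<lambda>p. R *v p) ` L) = voronoi L'"
    using voronoi_rotate[OF \<open>orthogonal_matrix R\<close>] R(2) by simp
  then have "(\<lambda>p. R *v p) ` L = L'"
    using lattice_eq_if_voronoi_eq is_lattice_matrix_image[OF \<open>invertible R\<close> assms(1)] assms(2) by blast
  then show thesis
    using that R(1) by blast
qed

section \<open>Continuity\<close>

lemma inner_perturb_le:
  fixes p a b :: "'a::real_inner"
  assumes pb: "2 * (p \<bullet> b) \<le> b \<bullet> b" and p: "norm p \<le> C"
    and ab: "norm (a - b) \<le> \<delta> * norm a" and a: "1 \<le> K * norm a" and "0 \<le> \<delta>"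
  shows "2 * (p \<bullet> a) \<le> ((1 + \<delta>)\<^sup>2 + 2 * C * \<delta> * K) * (a \<bullet> a)"
proof -
  have "0 \<le> C"
    using p norm_ge_zero order_trans by blast
  have "2 * (p \<bullet> a) = 2 * (p \<bullet> b) + 2 * (p \<bullet> (a - b))"
    by (simp add: inner_diff_right)
  also have "\<dots> \<le> b \<bullet> b + 2 * (C * (\<delta> * norm a))"
    using pb norm_cauchy_schwarz[of p "a - b"] mult_mono[OF p ab \<open>0 \<le> C\<close> norm_ge_zero] by linarith
  also have "b \<bullet> b \<le> ((1 + \<delta>) * norm a)\<^sup>2"
  proof -
    have "norm b \<le> norm a + norm (a - b)"
      by (metis norm_triangle_sub add.commute norm_minus_commute)
    then have "norm b \<le> (1 + \<delta>) * norm a"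
      using ab by (simp add: algebra_simps)
    then show ?thesis
      by (simp add: dot_square_norm power_mono)
  qed
  also have "C * (\<delta> * norm a) \<le> C * \<delta> * K * (norm a * norm a)"
  proof -
    have "1 * norm a \<le> K * norm a * norm a"
      using a by (rule mult_right_mono) simp
    moreover have "0 \<le> C * \<delta>"
      using \<open>0 \<le> C\<close> \<open>0 \<le> \<delta>\<close> by simp
    ultimately show ?thesis
      using mult_left_mono by (fastforce simp: ac_simps)
  qed
  finally show ?thesis
    by (simp add: dot_square_norm power2_eq_square algebra_simps)
qed

text \<open>The constraint that \<open>p \<in> voronoi (lattice_gen A)\<close> satisfies for the lattice vector
  \<open>A *v x\<close> transfers, up to the displayed factor, to the vector \<open>A' *v x\<close> with the same
  coordinates.\<close>

lemma voronoi_perturb_ineq: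
  fixes A A' :: "real^'n^'n"
  assumes p: "p \<in> voronoi (lattice_gen A)" "norm p \<le> C"
    and K: "\<And>x. norm x \<le> K * norm (A' *v x)" and q: "q \<in> lattice_gen A'"
  shows "2 * (p \<bullet> q) \<le> ((1 + norm (A - A') * K)\<^sup>2 + 2 * C * (norm (A - A') * K) * K) * (q \<bullet> q)"
proof -
  obtain x where x: "int_vec x" "q = A' *v x"
    using q mem_lattice_gen by blast
  show ?thesis
  proof (cases "x = 0")
    case False
    then have Kq: "1 \<le> K * norm q"
      using norm_int_vec_ge_1[OF x(1) False] K[of x] unfolding x(2) by linarith
    then have "0 \<le> norm (A - A') * K"
      using zero_less_mult_iff[of K "norm q"] by auto
    moreover have "norm (q - A *v x) \<le> norm (A - A') * K * norm q"
    proof -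
      have "norm (q - A *v x) = norm ((A - A') *v x)"
        by (simp add: x(2) matrix_vector_mult_diff_rdistrib norm_minus_commute)
      also have "\<dots> \<le> norm (A - A') * (K * norm q)"
        using mult_left_mono[OF K[of x] norm_ge_zero[of "A - A'"]]
          norm_matrix_vector_mult_le[of "A - A'" x] unfolding x(2) by linarith
      finally show ?thesis
        by (simp add: mult.assoc)
    qed
    moreover have "A *v x \<in> lattice_gen A"
      using x(1) mem_lattice_gen by blast
    ultimately show ?thesis
      using inner_perturb_le[OF voronoi_ineq[OF p(1)] p(2) _ Kq] by blast
  qed (simp add: x(2))
qed

lemma scales_if_voronoi_ineq:
  assumes "c > 0" "\<And>p q. p \<in> voronoi L \<Longrightarrow> q \<in> L' \<Longrightarrow> 2 * (p \<bullet> q) \<le> c * (q \<bullet> q)"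
  shows "c \<in> scales L L'"
proof -
  have "(1 / c) *\<^sub>R p \<in> voronoi L'" if "p \<in> voronoi L" for p
    unfolding mem_voronoi_iff using assms(2)[OF that] assms(1) by (simp add: pos_divide_le_eq mult.commute)
  then have "(\<lambda>p. mat 1 *v p) ` voronoi L \<subseteq> (\<lambda>p. c *\<^sub>R p) ` voronoi L'"
    using mem_scaleR_image_iff[of c] assms(1) by auto
  then show ?thesis
    unfolding scales_def using assms(1) rotation_id by blast
qed

lemma perturbed_lattice_gen_scales:
  fixes B B1 :: "real^'n^'n"
  assumes B: "invertible B" "invertible B1"
    and K: "\<And>x. norm x \<le> K * norm (B *v x)" "K > 0"
    and close: "K * norm (B1 - B) \<le> 1/2" "norm (B1 - B) \<le> 1"
  defines "C \<equiv> (norm B + 1) * CARD('n)"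
  defines "c \<equiv> (1 + norm (B1 - B) * (2 * K))\<^sup>2 + 2 * C * (norm (B1 - B) * (2 * K)) * (2 * K)"
  shows "c \<in> scales (lattice_gen B1) (lattice_gen B)" "c \<in> scales (lattice_gen B) (lattice_gen B1)"
proof -
  have K1: "norm x \<le> 2 * K * norm (B1 *v x)" for x
    using matrix_lower_bound_perturb[OF K close(1)] .
  have K2: "norm x \<le> 2 * K * norm (B *v x)" for x
    by (rule order_trans[OF K(1)]) (simp add: mult_right_mono K(2) less_imp_le)
  have "norm B1 \<le> norm B + 1"
    using norm_triangle_ineq[of B "B1 - B"] close(2) by simp
  then have C1: "norm p \<le> C" if "p \<in> voronoi (lattice_gen B1)" for p
    by (intro order_trans[OF norm_voronoi_lattice_gen_le[OF B(2) that]]) (simp add: C_def mult_right_mono)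
  have C2: "norm p \<le> C" if "p \<in> voronoi (lattice_gen B)" for p
    by (intro order_trans[OF norm_voronoi_lattice_gen_le[OF B(1) that]]) (simp add: C_def mult_right_mono)
  have "c > 0"
    unfolding c_def C_def using K(2) by (intro add_pos_nonneg zero_less_power mult_nonneg_nonneg) auto
  show "c \<in> scales (lattice_gen B1) (lattice_gen B)"
  proof (rule scales_if_voronoi_ineq[OF \<open>c > 0\<close>])
    fix p q assume "p \<in> voronoi (lattice_gen B1)" "q \<in> lattice_gen B"
    then show "2 * (p \<bullet> q) \<le> c * (q \<bullet> q)"
      unfolding c_def using voronoi_perturb_ineq[OF _ C1 K2] by blast
  qed
  show "c \<in> scales (lattice_gen B) (lattice_gen B1)"
  proof (rule scales_if_voronoi_ineq[OF \<open>c > 0\<close>])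
    fix p q assume "p \<in> voronoi (lattice_gen B)" "q \<in> lattice_gen B1"
    then show "2 * (p \<bullet> q) \<le> c * (q \<bullet> q)"
      unfolding c_def norm_minus_commute[of B1 B] using voronoi_perturb_ineq[OF _ C2 K1] by blast
  qed
qed

lemma ds_lattice_gen_near:
  fixes B :: "real^'n^'n"
  assumes "invertible B" "e > 0"
  obtains d where "d > 0"
    "\<And>B1. invertible B1 \<Longrightarrow> norm (B1 - B) < d \<Longrightarrow> ds (lattice_gen B1) (lattice_gen B) \<le> e"
proof -
  obtain K where K: "K > 0" "\<And>x. norm x \<le> K * norm (B *v x)"
    using invertible_matrix_lower_bound[OF assms(1)] by blast
  define C where "C = (norm B + 1) * CARD('n)"
  define g where "g t = (1 + t * (2 * K))\<^sup>2 + 2 * C * (t * (2 * K)) * (2 * K)" for t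
  have "isCont g 0"
    unfolding g_def by (intro continuous_intros)
  then obtain d0 where "d0 > 0" and d0: "\<And>t. \<bar>t\<bar> < d0 \<Longrightarrow> g t < 1 + e"
    unfolding continuous_at_eps_delta using \<open>e > 0\<close> by (force simp: g_def dist_real_def)
  define d where "d = min d0 (min 1 (1 / (2 * K)))"
  have "ds (lattice_gen B1) (lattice_gen B) \<le> e" if B1: "invertible B1" "norm (B1 - B) < d" for B1
  proof -
    have "K * norm (B1 - B) \<le> 1/2" "norm (B1 - B) \<le> 1"
      using B1(2) K(1) unfolding d_def by (simp_all add: field_simps)
    then have g: "g (norm (B1 - B)) \<in> scales (lattice_gen B1) (lattice_gen B)"
      "g (norm (B1 - B)) \<in> scales (lattice_gen B) (lattice_gen B1)"
      unfolding g_def C_def using perturbed_lattice_gen_scales[OF assms(1) B1(1) K(2,1)] by blast+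
    then have "ds (lattice_gen B1) (lattice_gen B) \<le> ln (g (norm (B1 - B)))"
      using ds_le_ln is_lattice_lattice_gen B1(1) assms(1) by blast
    also have "\<dots> \<le> ln (1 + e)"
      using d0[of "norm (B1 - B)"] B1(2) scales_pos[OF g(1)]
      unfolding d_def by (simp add: less_imp_le)
    also have "\<dots> \<le> e"
      using ln_add_one_self_le_self \<open>e > 0\<close> by simp
    finally show ?thesis .
  qed
  moreover have "d > 0"
    unfolding d_def using \<open>d0 > 0\<close> K(1) by simp
  ultimately show thesis
    using that by blast
qed

lemma abs_ds_diff_le:
  assumes "is_lattice L" "is_lattice L'" "is_lattice M" "is_lattice M'"
  shows "\<bar>ds M M' - ds L L'\<bar> \<le> ds M L + ds M' L'"
  using ds_triangle[OF assms(3,1,4)] ds_triangle[OF assms(1,2,4)] ds_triangle[OF assms(1,3,2)]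
    ds_triangle[OF assms(3,4,2)] ds_sym[of L M] ds_sym[of L' M'] by linarith

lemma continuous_on_ds_lattice_gen:
  "continuous_on {(B, B'). invertible (B :: real^'n^'n) \<and> invertible (B' :: real^'n^'n)}
     (\<lambda>(B, B'). ds (lattice_gen B) (lattice_gen B'))"
  unfolding continuous_on_iff
proof (intro ballI allI impI)
  fix z :: "(real^'n^'n) \<times> (real^'n^'n)" and e :: real
  assume "z \<in> {(B, B'). invertible B \<and> invertible B'}" "e > 0"
  then obtain B B' where z: "z = (B, B')" "invertible B" "invertible B'"
    by auto
  obtain d1 where "d1 > 0" and d1: "\<And>B1. invertible B1 \<Longrightarrow> norm (B1 - B) < d1 \<Longrightarrow>
      ds (lattice_gen B1) (lattice_gen B) \<le> e / 3"
    using ds_lattice_gen_near[OF z(2)] \<open>e > 0\<close> by (metis divide_pos_pos zero_less_numeral)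
  obtain d2 where "d2 > 0" and d2: "\<And>B1. invertible B1 \<Longrightarrow> norm (B1 - B') < d2 \<Longrightarrow>
      ds (lattice_gen B1) (lattice_gen B') \<le> e / 3"
    using ds_lattice_gen_near[OF z(3)] \<open>e > 0\<close> by (metis divide_pos_pos zero_less_numeral)
  have "\<bar>ds (lattice_gen B1) (lattice_gen B1') - ds (lattice_gen B) (lattice_gen B')\<bar> < e"
    if "invertible B1" "invertible B1'" "dist (B1, B1') (B, B') < min d1 d2" for B1 B1'
  proof -
    have "norm (B1 - B) < d1" "norm (B1' - B') < d2"
      using dist_fst_le[of "(B1, B1')" "(B, B')"] dist_snd_le[of "(B1, B1')" "(B, B')"] that(3)
      by (simp_all add: dist_norm)
    then have "ds (lattice_gen B1) (lattice_gen B) \<le> e / 3" "ds (lattice_gen B1') (lattice_gen B') \<le> e / 3"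
      using d1 d2 that(1,2) by blast+
    then show ?thesis
      using abs_ds_diff_le[OF is_lattice_lattice_gen is_lattice_lattice_gen is_lattice_lattice_gen
          is_lattice_lattice_gen, OF z(2,3) that(1,2)] \<open>e > 0\<close> by linarith
  qed
  then show "\<exists>d>0. \<forall>z'\<in>{(B, B'). invertible B \<and> invertible B'}. dist z' z < d \<longrightarrow>
      dist ((\<lambda>(B, B'). ds (lattice_gen B) (lattice_gen B')) z')
        ((\<lambda>(B, B'). ds (lattice_gen B) (lattice_gen B')) z) < e"
    using \<open>d1 > 0\<close> \<open>d2 > 0\<close> z(1) by (intro exI[of _ "min d1 d2"]) (auto simp: dist_real_def)
qed

theorem theorem4:
  fixes L L' L'' :: "(real^'n) set"
  assumes "is_lattice L" and "is_lattice L'" and "is_lattice L''"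
  shows "ds L L' \<ge> 0
    \<and> (ds L L' = 0 \<longleftrightarrow> (\<exists>R. rotation R \<and> (\<lambda>p. R *v p) ` L = L'))
    \<and> ds L L' = ds L' L
    \<and> ds L L' + ds L' L'' \<ge> ds L L''
    \<and> continuous_on {(B, B'). invertible (B :: real^'n^'n) \<and> invertible (B' :: real^'n^'n)}
        (\<lambda>(B, B'). ds (lattice_gen B) (lattice_gen B'))
    \<and> (\<forall>c::real. c > 0 \<longrightarrow> ds ((\<lambda>p. c *\<^sub>R p) ` L) ((\<lambda>p. c *\<^sub>R p) ` L') = ds L L')"
proof (intro conjI allI impI)
  show "ds L L' \<ge> 0"
    using ds_nonneg assms by blast
  show "ds L L' = 0 \<longleftrightarrow> (\<exists>R. rotation R \<and> (\<lambda>p. R *v p) ` L = L')"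
    using rotate_if_ds_eq_0[OF assms(1,2)] ds_eq_0_if_rotate[OF assms(1,2)] by metis
  show "ds L L' = ds L' L"
    by (rule ds_sym)
  show "ds L L' + ds L' L'' \<ge> ds L L''"
    using ds_triangle[OF assms] by simp
  show "continuous_on {(B, B'). invertible (B :: real^'n^'n) \<and> invertible (B' :: real^'n^'n)}
        (\<lambda>(B, B'). ds (lattice_gen B) (lattice_gen B'))"
    by (rule continuous_on_ds_lattice_gen)
  fix c :: real assume "c > 0"
  then show "ds ((\<lambda>p. c *\<^sub>R p) ` L) ((\<lambda>p. c *\<^sub>R p) ` L') = ds L L'"
    by (rule ds_scaleR_image)
qed

end
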